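(* If $d_Y\colon Y\times Y\to\mathcal{V}$ is a $\mathcal{V}$-category (i.e. $k\sqsubseteq d_Y(y,y)$ and $d_Y(y_1,y_2)\otimes d_Y(y_2,y_3)\sqsubseteq d_Y(y_1,y_3)$ for all $y,y_1,y_2,y_3\in Y$), then for every function $f\colon X\to Y$, \[\{q\circ f\mid q\in\gamma_Y(d_Y)\}\;=\;\gamma_X(d_Y\circ(f\times f)),\] i.e. $\gamma$ is natural when restricted to $\mathcal{V}$-categories.
   Context: $\mathcal{V}$ is a quantale: a complete lattice $(\mathcal{V},\sqsubseteq)$ with a commutative monoid structure $(\mathcal{V},\otimes,k)$ such that $\otimes$ preserves arbitrary joins in each argument; $d_\mathcal{V}(a,-)$ denotes the right adjoint of $a\otimes -$ (residuation). Write $\bigwedge$ for meets in the order $\sqsubseteq$. For a set $X$ and $S\subseteq\mathcal{V}^X$, $\alpha_X(S)(x_1,x_2)=\bigwedge_{p\in S} d_\mathcal{V}(p(x_1),p(x_2))$; for $d_X\colon X\times X\to\mathcal{V}$, $\gamma_X(d_X)=\{p\colon X\to\mathcal{V}\mid d_X(x_1,x_2)\sqsubseteq d_\mathcal{V}(p(x_1),p(x_2))\text{ for all }x_1,x_2\}$. *)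

theory Defs
  imports Main
begin

definition quantale :: "('v::complete_lattice \<Rightarrow> 'v \<Rightarrow> 'v) \<Rightarrow> 'v \<Rightarrow> bool" where
  "quantale tensor k \<longleftrightarrow>
     (\<forall>a b c. tensor (tensor a b) c = tensor a (tensor b c)) \<and>
     (\<forall>a b. tensor a b = tensor b a) \<and>
     (\<forall>a. tensor k a = a) \<and>
     (\<forall>a A. tensor a (Sup A) = Sup (tensor a ` A)) \<and>
     (\<forall>a A. tensor (Sup A) a = Sup ((\<lambda>b. tensor b a) ` A))"

text \<open>Residuation d_V(a,-): the right adjoint of a \<otimes> -, given by
  d_V(a,b) = Sup {c. a \<otimes> c \<le> b}.\<close>
definition resid :: "('v::complete_lattice \<Rightarrow> 'v \<Rightarrow> 'v) \<Rightarrow> 'v \<Rightarrow> 'v \<Rightarrow> 'v" where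
  "resid tensor a b = Sup {c. tensor a c \<le> b}"

definition gammaV :: "('v::complete_lattice \<Rightarrow> 'v \<Rightarrow> 'v) \<Rightarrow> ('x \<Rightarrow> 'x \<Rightarrow> 'v) \<Rightarrow> ('x \<Rightarrow> 'v) set" where
  "gammaV tensor d = {p. \<forall>x1 x2. d x1 x2 \<le> resid tensor (p x1) (p x2)}"

definition Vcat :: "('v::complete_lattice \<Rightarrow> 'v \<Rightarrow> 'v) \<Rightarrow> 'v \<Rightarrow> ('y \<Rightarrow> 'y \<Rightarrow> 'v) \<Rightarrow> bool" where
  "Vcat tensor k d \<longleftrightarrow> (\<forall>y. k \<le> d y y) \<and>
     (\<forall>y1 y2 y3. tensor (d y1 y2) (d y2 y3) \<le> d y1 y3)"

end

theory Submission
  imports Defs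
begin

text \<open>The inclusion from left to right holds for any distance. Conversely, a function
  p in gammaV of the pulled-back distance extends along f by the left Kan extension
  q y = \<Squnion>x. p x \<otimes> d_Y (f x) y: transitivity of d_Y makes q a member of gammaV d_Y,
  and reflexivity together with the condition on p gives q \<circ> f = p.\<close>

lemma quantale_tensor_mono:
  assumes "quantale tensor k" and "a \<le> b"
  shows "tensor c a \<le> tensor c b"
proof -
  have "b = Sup {a, b}" using assms(2) by (simp add: sup.absorb2)
  then have "tensor c b = Sup (tensor c ` {a, b})" using assms(1) unfolding quantale_def by metis
  then show ?thesis by (simp add: le_iff_sup)
qed

lemma quantale_le_resid_iff:
  assumes q: "quantale tensor k"
  shows "c \<le> resid tensor a b \<longleftrightarrow> tensor a c \<le> b"
proof
  assume "c \<le> resid tensor a b"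
  then have "tensor a c \<le> tensor a (Sup {c. tensor a c \<le> b})"
    using quantale_tensor_mono[OF q] unfolding resid_def by blast
  also have "\<dots> = Sup (tensor a ` {c. tensor a c \<le> b})"
    using q unfolding quantale_def by metis
  also have "\<dots> \<le> b" by (auto intro: Sup_least)
  finally show "tensor a c \<le> b" .
next
  assume "tensor a c \<le> b"
  then show "c \<le> resid tensor a b" unfolding resid_def by (auto intro: Sup_upper)
qed

lemma quantale_mem_gammaV_iff:
  assumes "quantale tensor k"
  shows "p \<in> gammaV tensor d \<longleftrightarrow> (\<forall>x1 x2. tensor (p x1) (d x1 x2) \<le> p x2)"
  unfolding gammaV_def using quantale_le_resid_iff[OF assms] by blast

lemma comp_image_gammaV_subset:
  "(\<lambda>q. q \<circ> f) ` gammaV tensor d \<subseteq> gammaV tensor (\<lambda>x1 x2. d (f x1) (f x2))"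
  unfolding gammaV_def by auto

definition left_extension ::
    "('v::complete_lattice \<Rightarrow> 'v \<Rightarrow> 'v) \<Rightarrow> ('y \<Rightarrow> 'y \<Rightarrow> 'v) \<Rightarrow> ('x \<Rightarrow> 'y) \<Rightarrow> ('x \<Rightarrow> 'v) \<Rightarrow> 'y \<Rightarrow> 'v"
  where "left_extension tensor d f p y = Sup (range (\<lambda>x. tensor (p x) (d (f x) y)))"

lemma left_extension_mem_gammaV:
  assumes q: "quantale tensor k"
    and trans: "\<And>y1 y2 y3. tensor (d y1 y2) (d y2 y3) \<le> d y1 y3"
  shows "left_extension tensor d f p \<in> gammaV tensor d"
  unfolding quantale_mem_gammaV_iff[OF q]
proof (intro allI)
  fix y1 y2
  have "tensor (tensor (p x) (d (f x) y1)) (d y1 y2) \<le> left_extension tensor d f p y2" for x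
  proof -
    have "tensor (tensor (p x) (d (f x) y1)) (d y1 y2) = tensor (p x) (tensor (d (f x) y1) (d y1 y2))"
      using q unfolding quantale_def by blast
    also have "\<dots> \<le> tensor (p x) (d (f x) y2)" using quantale_tensor_mono[OF q trans] .
    also have "\<dots> \<le> left_extension tensor d f p y2"
      unfolding left_extension_def by (rule Sup_upper) auto
    finally show ?thesis .
  qed
  moreover have "tensor (left_extension tensor d f p y1) (d y1 y2)
      = Sup ((\<lambda>b. tensor b (d y1 y2)) ` range (\<lambda>x. tensor (p x) (d (f x) y1)))"
    using q unfolding quantale_def left_extension_def by blast
  ultimately show "tensor (left_extension tensor d f p y1) (d y1 y2) \<le> left_extension tensor d f p y2"
    by (auto intro: Sup_least)
qed

lemma left_extension_comp:
  assumes q: "quantale tensor k"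
    and refl: "\<And>y. k \<le> d y y"
    and p: "p \<in> gammaV tensor (\<lambda>x1 x2. d (f x1) (f x2))"
  shows "left_extension tensor d f p \<circ> f = p"
proof
  fix x
  have "p x = tensor (p x) k" using q unfolding quantale_def by metis
  also have "\<dots> \<le> tensor (p x) (d (f x) (f x))" using quantale_tensor_mono[OF q refl] .
  also have "\<dots> \<le> left_extension tensor d f p (f x)"
    unfolding left_extension_def by (rule Sup_upper) auto
  finally have "p x \<le> left_extension tensor d f p (f x)" .
  moreover have "left_extension tensor d f p (f x) \<le> p x"
    using p unfolding quantale_mem_gammaV_iff[OF q] left_extension_def by (auto intro: Sup_least)
  ultimately show "(left_extension tensor d f p \<circ> f) x = p x" by simp
qed

theorem mainTheorem5:
  fixes tensor :: "'v::complete_lattice \<Rightarrow> 'v \<Rightarrow> 'v" and k :: 'v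
    and dY :: "'y \<Rightarrow> 'y \<Rightarrow> 'v" and f :: "'x \<Rightarrow> 'y"
  assumes "quantale tensor k"
    and "Vcat tensor k dY"
  shows "(\<lambda>q. q \<circ> f) ` gammaV tensor dY = gammaV tensor (\<lambda>x1 x2. dY (f x1) (f x2))"
proof
  show "(\<lambda>q. q \<circ> f) ` gammaV tensor dY \<subseteq> gammaV tensor (\<lambda>x1 x2. dY (f x1) (f x2))"
    by (rule comp_image_gammaV_subset)
next
  have refl: "\<And>y. k \<le> dY y y" and trans: "\<And>y1 y2 y3. tensor (dY y1 y2) (dY y2 y3) \<le> dY y1 y3"
    using assms(2) unfolding Vcat_def by auto
  show "gammaV tensor (\<lambda>x1 x2. dY (f x1) (f x2)) \<subseteq> (\<lambda>q. q \<circ> f) ` gammaV tensor dY"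
  proof
    fix p assume p: "p \<in> gammaV tensor (\<lambda>x1 x2. dY (f x1) (f x2))"
    have "p = left_extension tensor dY f p \<circ> f"
      using left_extension_comp[where f = f, OF assms(1) refl p] by simp
    moreover have "left_extension tensor dY f p \<in> gammaV tensor dY"
      using left_extension_mem_gammaV[OF assms(1) trans] .
    ultimately show "p \<in> (\<lambda>q. q \<circ> f) ` gammaV tensor dY" by blast
  qed
qed

end
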